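(* Let $I, I_1, I_2, \dots$ be IID $\mathbb{Z}$-valued random variables with $E I_- < E I_+ < \infty$. Let $U_1, U_2, \dots$ be IID $U[0,1]$ random variables, independent of $(I_n)$. Set $S_{n,+} := \sum_{0<j\le n} (I_j)_+$ and $S_{n,-} := \sum_{0<j\le n} (I_j)_-$. For $f \in [0,1]$ and $n \in \mathbb{Z}_+$, define $$S_n(f) := \sum_{0<j\le S_{n,+}} \mathbf{1}_{[0,f]}(U_j) - S_{n,-}, \qquad M_n(f) := \min\bigl(0, S_1(f), \dots, S_n(f)\bigr),$$ $$C_{n+1}(f) := \sum_{S_{n,+} < j \le S_{n+1,+}} \mathbf{1}_{[0,f]}(U_j),$$ $$L_0(f) := 0, \qquad L_{n+1}(f) := L_n(f) + \max\bigl(C_{n+1}(f) - (I_{n+1})_-,\, -L_n(f)\bigr).$$ Let $f_c := E I_- / E I_+$. Then for every $f \in [0,1]$: 1. $\lim_{n\to\infty} L_n(f)/n = (f - f_c)_+\, E I_+$ almost surely; 2. $\lim_{n\to\infty} M_n(f)/n = -(f - f_c)_-\, E I_+$ almost surely.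
   Context: $x_+ := \max(x,0)$ and $x_- := -\min(x,0)$. Empty sums are $0$. *)

theory Defs
  imports "HOL-Probability.Probability"
begin

definition ipos :: "int \<Rightarrow> nat" where "ipos x = nat (max x 0)"
definition ineg :: "int \<Rightarrow> nat" where "ineg x = nat (- min x 0)"

definition Splus :: "(nat \<Rightarrow> 'a \<Rightarrow> int) \<Rightarrow> nat \<Rightarrow> 'a \<Rightarrow> nat" where
  "Splus I n \<omega> = (\<Sum>j\<in>{1..n}. ipos (I j \<omega>))"
definition Sminus :: "(nat \<Rightarrow> 'a \<Rightarrow> int) \<Rightarrow> nat \<Rightarrow> 'a \<Rightarrow> nat" where
  "Sminus I n \<omega> = (\<Sum>j\<in>{1..n}. ineg (I j \<omega>))"

definition Sf :: "(nat \<Rightarrow> 'a \<Rightarrow> int) \<Rightarrow> (nat \<Rightarrow> 'a \<Rightarrow> real) \<Rightarrow> real \<Rightarrow> nat \<Rightarrow> 'a \<Rightarrow> real" where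
  "Sf I U f n \<omega> = (\<Sum>j\<in>{1..Splus I n \<omega>}. indicator {0..f} (U j \<omega>)) - real (Sminus I n \<omega>)"

definition Mf :: "(nat \<Rightarrow> 'a \<Rightarrow> int) \<Rightarrow> (nat \<Rightarrow> 'a \<Rightarrow> real) \<Rightarrow> real \<Rightarrow> nat \<Rightarrow> 'a \<Rightarrow> real" where
  "Mf I U f n \<omega> = Min (insert 0 ((\<lambda>k. Sf I U f k \<omega>) ` {1..n}))"

definition Cf :: "(nat \<Rightarrow> 'a \<Rightarrow> int) \<Rightarrow> (nat \<Rightarrow> 'a \<Rightarrow> real) \<Rightarrow> real \<Rightarrow> nat \<Rightarrow> 'a \<Rightarrow> real" where
  "Cf I U f n \<omega> = (\<Sum>j\<in>{Splus I n \<omega><..Splus I (Suc n) \<omega>}. indicator {0..f} (U j \<omega>))"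

text \<open>L_n(f); note Cf I U f n is C_{n+1}(f).\<close>
fun Lf :: "(nat \<Rightarrow> 'a \<Rightarrow> int) \<Rightarrow> (nat \<Rightarrow> 'a \<Rightarrow> real) \<Rightarrow> real \<Rightarrow> nat \<Rightarrow> 'a \<Rightarrow> real" where
  "Lf I U f 0 \<omega> = 0"
| "Lf I U f (Suc n) \<omega> = Lf I U f n \<omega> +
     max (Cf I U f n \<omega> - real (ineg (I (Suc n) \<omega>))) (- Lf I U f n \<omega>)"

end

theory Submission
  imports Defs
begin

text \<open>The recursion defining L_n(f) is Lindley's recursion
  L_{n+1} = max (L_n + S_{n+1}(f) - S_n(f)) 0 driven by the walk S_n(f), so L_n(f) = S_n(f) - M_n(f).
  By the strong law of large numbers S_{n,+}/n \<rightarrow> E I_+, S_{n,-}/n \<rightarrow> E I_- and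
  (1/N) \<Sum>_{j \<le> N} 1[U_j \<le> f] \<rightarrow> f; as S_{n,+} \<rightarrow> \<infinity>, these combine to
  S_n(f)/n \<rightarrow> d = f E I_+ - E I_-. Consequently M_n(f)/n \<rightarrow> min d 0 and L_n(f)/n \<rightarrow> max d 0,
  which are the claimed limits.

  The strong law for nonnegative integrable i.i.d. variables is proved along Etemadi's lines:
  along n = j 2^m, truncation at level n is eventually exact and the truncated sums concentrate
  (Chebyshev and Borel--Cantelli; the variance bounds are summable because
  \<Sum>_m E[min X (c 2^m)^2] / (c 2^m) \<le> 4 E X), and monotonicity of the partial sums interpolates
  between these subsequences.\<close>

section \<open>Independence, variance and identical distribution\<close>

lemma (in prob_space) abs_centered_le:
  fixes Y :: "'a \<Rightarrow> real"
  assumes "Y \<in> borel_measurable M" "\<And>\<omega>. \<bar>Y \<omega>\<bar> \<le> B"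
  shows "\<bar>Y \<omega> - expectation Y\<bar> \<le> 2 * B"
proof -
  have "\<bar>expectation Y\<bar> \<le> expectation (\<lambda>\<omega>. \<bar>Y \<omega>\<bar>)"
    by (rule integral_abs_bound)
  also have "\<dots> \<le> expectation (\<lambda>_. B)"
    using assms order_trans[OF abs_ge_zero assms(2)]
    by (intro integral_mono integrable_const_bound[where B=B]) auto
  finally show ?thesis using assms(2)[of \<omega>] by (simp add: prob_space)
qed

lemma (in prob_space) variance_sum_indep_bounded:
  fixes Y :: "'i \<Rightarrow> 'a \<Rightarrow> real"
  assumes fin: "finite A" and ind: "indep_vars (\<lambda>_. borel) Y A"
    and bnd: "\<And>i \<omega>. i \<in> A \<Longrightarrow> \<bar>Y i \<omega>\<bar> \<le> B"
  shows "variance (\<lambda>\<omega>. \<Sum>i\<in>A. Y i \<omega>) = (\<Sum>i\<in>A. variance (Y i))"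
proof -
  have [measurable]: "i \<in> A \<Longrightarrow> Y i \<in> borel_measurable M" for i
    using ind unfolding indep_vars_def by auto
  have intY: "i \<in> A \<Longrightarrow> integrable M (Y i)" for i
    by (rule integrable_const_bound[where B=B]) (auto simp: bnd)
  define D where "D i \<omega> = Y i \<omega> - expectation (Y i)" for i \<omega>
  have [measurable]: "i \<in> A \<Longrightarrow> D i \<in> borel_measurable M" for i
    unfolding D_def by measurable
  have bndD: "i \<in> A \<Longrightarrow> \<bar>D i \<omega>\<bar> \<le> 2*B" for i \<omega>
    unfolding D_def by (rule abs_centered_le) (auto simp: bnd)
  have intD: "i \<in> A \<Longrightarrow> integrable M (D i)" for i
    by (rule integrable_const_bound[where B="2*B"]) (auto simp: bndD)
  have intDD: "integrable M (\<lambda>\<omega>. D i \<omega> * D j \<omega>)" if ij: "i \<in> A" "j \<in> A" for i j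
  proof (rule integrable_const_bound[where B="2*B*(2*B)"])
    have "\<bar>D i \<omega>\<bar> * \<bar>D j \<omega>\<bar> \<le> 2*B*(2*B)" for \<omega>
      by (rule mult_mono) (use bndD[OF ij(1)] bndD[OF ij(2)] order_trans[OF abs_ge_zero bndD[OF ij(1)]] in auto)
    then show "AE \<omega> in M. norm (D i \<omega> * D j \<omega>) \<le> 2*B*(2*B)" by (simp add: abs_mult)
  qed (use ij in measurable)
  have cross: "expectation (\<lambda>\<omega>. D i \<omega> * D j \<omega>) = (if i = j then variance (Y i) else 0)"
    if ij: "i \<in> A" "j \<in> A" for i j
  proof (cases "i = j")
    case True then show ?thesis by (simp add: D_def power2_eq_square)
  next
    case False
    have "indep_vars (\<lambda>_. borel) D {i, j}"
      unfolding D_def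
      by (rule indep_vars_compose2[where X=Y and M'="\<lambda>_. borel", OF indep_vars_subset[OF ind]])
         (use ij in auto)
    then have "expectation (\<lambda>\<omega>. \<Prod>k\<in>{i,j}. D k \<omega>) = (\<Prod>k\<in>{i,j}. expectation (D k))"
      by (intro indep_vars_lebesgue_integral) (use ij intD in auto)
    moreover have "expectation (D i) = 0"
      unfolding D_def using intY[OF ij(1)] by (simp add: prob_space)
    ultimately show ?thesis using False by simp
  qed
  have "expectation (\<lambda>\<omega>. \<Sum>i\<in>A. Y i \<omega>) = (\<Sum>i\<in>A. expectation (Y i))"
    using intY by (simp add: integral_sum)
  then have "variance (\<lambda>\<omega>. \<Sum>i\<in>A. Y i \<omega>) = expectation (\<lambda>\<omega>. (\<Sum>i\<in>A. D i \<omega>)^2)"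
    unfolding D_def by (simp add: sum_subtractf)
  also have "\<dots> = (\<Sum>i\<in>A. \<Sum>j\<in>A. expectation (\<lambda>\<omega>. D i \<omega> * D j \<omega>))"
    by (simp add: power2_eq_square sum_product integral_sum intDD integrable_sum)
  also have "\<dots> = (\<Sum>i\<in>A. variance (Y i))"
    using fin by (simp add: cross)
  finally show ?thesis .
qed

lemma (in prob_space) indep_vars_reindex:
  assumes ind: "indep_vars M' X (h ` I)" and inj: "inj_on h I"
  shows "indep_vars (\<lambda>i. M' (h i)) (\<lambda>i. X (h i)) I"
proof -
  define F where "F i = {X i -` A \<inter> space M | A. A \<in> sets (M' i)}" for i
  have rv: "\<forall>i\<in>h ` I. random_variable (M' i) (X i)"
    and ev: "\<forall>i\<in>h ` I. F i \<subseteq> events"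
    and pr: "\<And>J A. J \<subseteq> h ` I \<Longrightarrow> J \<noteq> {} \<Longrightarrow> finite J \<Longrightarrow> A \<in> Pi J F \<Longrightarrow>
              prob (\<Inter>j\<in>J. A j) = (\<Prod>j\<in>J. prob (A j))"
    using ind unfolding indep_vars_def2 indep_sets_def F_def by blast+
  show ?thesis
    unfolding indep_vars_def2 indep_sets_def
  proof (intro conjI ballI allI impI)
    fix i assume "i \<in> I" then show "random_variable (M' (h i)) (X (h i))" using rv by auto
  next
    fix i assume "i \<in> I" then show "{X (h i) -` A \<inter> space M |A. A \<in> sets (M' (h i))} \<subseteq> events"
      using ev by (auto simp: F_def)
  next
    fix J A assume J: "J \<subseteq> I" "J \<noteq> {}" "finite J"
      and A: "A \<in> Pi J (\<lambda>i. {X (h i) -` A \<inter> space M |A. A \<in> sets (M' (h i))})"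
    have injJ: "inj_on h J" using inj J(1) by (rule inj_on_subset)
    define B where "B x = A (the_inv_into J h x)" for x
    have Bh: "B (h j) = A j" if "j \<in> J" for j
      unfolding B_def using the_inv_into_f_f[OF injJ that] by simp
    have "B \<in> Pi (h ` J) F"
    proof
      fix x assume "x \<in> h ` J"
      then obtain j where "j \<in> J" "x = h j" by auto
      then show "B x \<in> F x" using A Bh by (auto simp: F_def)
    qed
    then have "prob (\<Inter>x\<in>h ` J. B x) = (\<Prod>x\<in>h ` J. prob (B x))"
      by (intro pr) (use J in auto)
    then show "prob (\<Inter>j\<in>J. A j) = (\<Prod>j\<in>J. prob (A j))"
      using Bh by (simp add: prod.reindex[OF injJ])
  qed
qed

lemma (in prob_space) indep_vars_comp_reindex:
  assumes "indep_vars (\<lambda>_. borel) Z K" "inj h" "range h \<subseteq> K" "g \<in> borel_measurable borel"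
  shows "indep_vars (\<lambda>_. borel) (\<lambda>i \<omega>. g (Z (h i) \<omega>)) UNIV"
proof -
  have "indep_vars (\<lambda>_. borel) (\<lambda>i. Z (h i)) UNIV"
    using indep_vars_reindex[OF indep_vars_subset[OF assms(1,3)]] assms(2) by simp
  then show ?thesis
    by (rule indep_vars_compose2) (use assms(4) in simp)
qed

lemma distr_comp_eq_of_distr_eq:
  assumes "distr M N X = distr M N Y" "X \<in> M \<rightarrow>\<^sub>M N" "Y \<in> M \<rightarrow>\<^sub>M N" "g \<in> N \<rightarrow>\<^sub>M K"
  shows "distr M K (\<lambda>\<omega>. g (X \<omega>)) = distr M K (\<lambda>\<omega>. g (Y \<omega>))"
  using distr_distr[OF assms(4,2)] distr_distr[OF assms(4,3)] by (simp add: comp_def assms(1))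

lemma
  fixes X Y :: "'a \<Rightarrow> real"
  assumes "distr M borel X = distr M borel Y" "X \<in> borel_measurable M" "Y \<in> borel_measurable M"
  shows integral_eq_of_distr_eq: "integral\<^sup>L M X = integral\<^sup>L M Y"
    and integrable_iff_of_distr_eq: "integrable M X \<longleftrightarrow> integrable M Y"
  using integral_distr[OF assms(2), of "\<lambda>x. x"] integral_distr[OF assms(3), of "\<lambda>x. x"]
    integrable_distr_eq[OF assms(2), of "\<lambda>x. x"] integrable_distr_eq[OF assms(3), of "\<lambda>x. x"]
  by (simp_all add: assms(1))

section \<open>Etemadi's strong law of large numbers\<close>

lemma AE_tendsto_0_of_AE_eventually_less:
  fixes Y :: "nat \<Rightarrow> 'a \<Rightarrow> real"
  assumes "\<And>\<epsilon>. 0 < \<epsilon> \<Longrightarrow> AE \<omega> in M. \<forall>\<^sub>F m in sequentially. \<bar>Y m \<omega>\<bar> < \<epsilon>"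
  shows "AE \<omega> in M. (\<lambda>m. Y m \<omega>) \<longlonglongrightarrow> 0"
proof -
  have "AE \<omega> in M. \<forall>r::nat. \<forall>\<^sub>F m in sequentially. \<bar>Y m \<omega>\<bar> < 1 / Suc r"
    by (subst AE_all_countable) (intro allI assms, simp)
  then show ?thesis
  proof eventually_elim
    case (elim \<omega>)
    show ?case
    proof (rule tendstoI)
      fix \<epsilon> :: real assume "0 < \<epsilon>"
      then obtain r :: nat where "1 / Suc r < \<epsilon>"
        using reals_Archimedean by (auto simp: inverse_eq_divide)
      moreover have "\<forall>\<^sub>F m in sequentially. \<bar>Y m \<omega>\<bar> < 1 / Suc r"
        using elim by blast
      ultimately show "\<forall>\<^sub>F m in sequentially. dist (Y m \<omega>) 0 < \<epsilon>"
        by (auto elim: eventually_mono)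
    qed
  qed
qed

lemma tendsto_expectation_min:
  fixes X :: "'a \<Rightarrow> real"
  assumes "integrable M X" "\<And>\<omega>. 0 \<le> X \<omega>" "\<And>m. 0 \<le> c m" "filterlim c at_top sequentially"
  shows "(\<lambda>m. integral\<^sup>L M (\<lambda>\<omega>. min (X \<omega>) (c m))) \<longlonglongrightarrow> integral\<^sup>L M X"
proof (rule integral_dominated_convergence[where w=X])
  show "AE \<omega> in M. (\<lambda>m. min (X \<omega>) (c m)) \<longlonglongrightarrow> X \<omega>"
  proof (rule AE_I2)
    fix \<omega>
    have "eventually (\<lambda>m. X \<omega> \<le> c m) sequentially"
      using assms(4) by (simp add: filterlim_at_top)
    then have "eventually (\<lambda>m. X \<omega> = min (X \<omega>) (c m)) sequentially"
      by eventually_elim simp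
    then show "(\<lambda>m. min (X \<omega>) (c m)) \<longlonglongrightarrow> X \<omega>"
      by (rule Lim_transform_eventually[OF tendsto_const])
  qed
  show "AE \<omega> in M. norm (min (X \<omega>) (c m)) \<le> X \<omega>" for m
    using assms(2,3) by (intro AE_I2) (auto simp: min_def)
qed (use assms(1) in \<open>auto dest: borel_measurable_integrable\<close>)

lemma sum_dyadic_below_le:
  fixes x c :: real
  assumes "0 \<le> x" "0 < c"
  shows "(\<Sum>m<N. if c * 2^m < x then c * 2^m else 0) \<le> 2 * x"
proof -
  have "(\<Sum>m<N. if c * 2^m < x then c * 2^m else 0) \<le> c * 2^N - c
     \<and> (\<Sum>m<N. if c * 2^m < x then c * 2^m else 0) \<le> 2 * x"
  proof (induction N)
    case 0 then show ?case using assms by simp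
  next
    case (Suc N)
    show ?case
    proof (cases "c * 2^N < x")
      case True
      then have "(\<Sum>m<Suc N. if c * 2^m < x then c * 2^m else 0)
          = (\<Sum>m<N. if c * 2^m < x then c * 2^m else 0) + c * 2^N" by simp
      moreover have "c * 2^Suc N = 2 * (c * 2^N)" by simp
      ultimately show ?thesis using Suc.IH True assms by linarith
    next
      case False
      then have "(\<Sum>m<Suc N. if c * 2^m < x then c * 2^m else 0)
          = (\<Sum>m<N. if c * 2^m < x then c * 2^m else 0)" by simp
      moreover have "c * 2^Suc N = 2 * (c * 2^N)" "0 \<le> c * 2^N" using assms by simp_all
      ultimately show ?thesis using Suc.IH by linarith
    qed
  qed
  then show ?thesis by blast
qed

lemma sum_dyadic_above_le:
  fixes x c :: real
  assumes "0 \<le> x" "0 < c"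
  shows "(\<Sum>m<N. if x \<le> c * 2^m then x^2 / (c * 2^m) else 0) \<le> 2 * x"
proof -
  let ?k = "\<lambda>m. c * 2^m"
  let ?S = "\<lambda>N. \<Sum>m<N. if x \<le> ?k m then x^2 / ?k m else 0"
  have kpos: "?k m > 0" for m using assms by simp
  have sq_le: "x^2 / ?k m \<le> x" if "x \<le> ?k m" for m
    using mult_left_mono[OF that assms(1)] kpos[of m] by (simp add: power2_eq_square divide_simps)
  \<comment> \<open>Once \<open>x \<le> c 2^m\<close>, the remaining terms form a geometric series bounded by twice the first.\<close>
  have "(?k N \<le> x \<longrightarrow> ?S N = 0) \<and> (x \<le> ?k N \<longrightarrow> ?S N \<le> 2*x - 2*x^2 / ?k N)"
  proof (induction N)
    case 0
    show ?case using sq_le[of 0] assms by auto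
  next
    case (Suc N)
    have kS: "?k (Suc N) = 2 * ?k N" by simp
    show ?case
    proof (cases "x \<le> ?k N")
      case True
      have s: "?S (Suc N) = ?S N + x^2 / ?k N" using True by simp
      have "2*x - 2*x^2 / ?k N + x^2 / ?k N = 2*x - 2*x^2/ ?k (Suc N)"
        using kpos[of N] by (simp add: field_simps)
      then have "?S (Suc N) \<le> 2*x - 2*x^2/ ?k (Suc N)" using s Suc True by linarith
      moreover have "?k (Suc N) \<le> x \<Longrightarrow> x = 0" using True kpos[of N] kS by auto
      ultimately show ?thesis using s sq_le[of N] True Suc by auto
    next
      case False
      then have "?S (Suc N) = 0" using Suc by simp
      moreover have "2*x^2 / ?k (Suc N) \<le> 2*x" if "x \<le> ?k (Suc N)"
        using sq_le[OF that] by (simp only: times_divide_eq_right[symmetric])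
      ultimately show ?thesis by simp
    qed
  qed
  moreover have "0 \<le> 2*x^2 / ?k N" using kpos[of N] by simp
  ultimately show ?thesis using assms by (smt (verit))
qed

lemma sum_truncated_square_dyadic_le:
  fixes x c :: real
  assumes "0 \<le> x" "0 < c"
  shows "(\<Sum>m<N. (min x (c * 2^m))^2 / (c * 2^m)) \<le> 4 * x"
proof -
  have "(min x (c * 2^m))^2 / (c * 2^m)
      = (if c * 2^m < x then c * 2^m else 0) + (if x \<le> c * 2^m then x^2 / (c * 2^m) else 0)" for m
    using assms by (auto simp: min_def power2_eq_square)
  then show ?thesis
    using sum_dyadic_below_le[OF assms, of N] sum_dyadic_above_le[OF assms, of N]
    by (simp add: sum.distrib)
qed

lemma exists_dyadic_bracket:
  fixes r M n :: nat
  assumes "r \<ge> 1" "n \<ge> r * 2^M"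
  shows "\<exists>m j. m \<ge> M \<and> r \<le> j \<and> j < 2*r \<and> j * 2^m \<le> n \<and> n < (j+1) * 2^m"
  using assms(2)
proof (induction n rule: dec_induct)
  case base
  show ?case by (rule exI[of _ M], rule exI[of _ r]) (use assms(1) in auto)
next
  case (step n)
  then obtain m j where mj: "m \<ge> M" "r \<le> j" "j < 2*r" "j * 2^m \<le> n" "n < (j+1) * 2^m" by blast
  have "Suc n < (j+1) * 2^m \<or> Suc n = (j+1) * 2^m" "j + 1 < 2*r \<or> j + 1 = 2*r"
    using mj by linarith+
  then consider "Suc n < (j+1) * 2^m" | "Suc n = (j+1) * 2^m" "j + 1 < 2*r" | "Suc n = r * 2^Suc m"
    by (metis mult.assoc mult.commute power_Suc)
  then show ?case
  proof cases
    case 1 then show ?thesis using mj by (intro exI[of _ m] exI[of _ j]) auto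
  next
    case 2 then show ?thesis using mj by (intro exI[of _ m] exI[of _ "j+1"]) auto
  next
    case 3 then show ?thesis using mj assms(1) by (intro exI[of _ "Suc m"] exI[of _ r]) auto
  qed
qed

lemma monotone_ratio_bracket:
  fixes s :: "nat \<Rightarrow> real" and r j m n :: nat
  assumes mono: "mono s" and nonneg: "\<And>n. 0 \<le> s n"
    and r: "1 \<le> r" "r \<le> j" and n: "j * 2^m \<le> n" "n < (j+1) * 2^m"
  shows "s (j*2^m) / (j*2^m) * (r / (r + 1)) \<le> s n / n"
    and "s n / n \<le> s ((j+1)*2^m) / ((j+1)*2^m) * ((r + 1) / r)"
proof -
  have p: "(0::real) < 2^m" by simp
  have jr: "real r \<le> real j" "(1::real) \<le> r" using r by simp_all
  have "real (j * 2^m) \<le> real n" "real n \<le> real ((j+1) * 2^m)"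
    using n by (simp_all only: of_nat_le_iff less_imp_le)
  then have n_lo: "real j * 2^m \<le> real n" and n_hi: "real n \<le> (real j + 1) * 2^m"
    by (simp_all add: distrib_right)
  have npos: "0 < real n" using n_lo jr p by (smt (verit) mult_pos_pos)
  have "real r * ((real j + 1) * 2^m) \<le> (real r + 1) * (real j * 2^m)"
    using mult_right_mono[OF jr(1) less_imp_le[OF p]] by (simp add: algebra_simps)
  then have "real r / ((real r + 1) * (real j * 2^m)) \<le> 1 / ((real j + 1) * 2^m)"
    using jr p by (simp add: divide_simps)
  note mult_left_mono[OF this nonneg[of "j*2^m"]]
  then have "s (j*2^m) / (j*2^m) * (r / (r + 1)) \<le> s (j*2^m) / ((real j + 1) * 2^m)"
    by (simp add: ac_simps)
  also have "\<dots> \<le> s (j*2^m) / n"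
    using n_hi npos nonneg[of "j*2^m"] by (intro divide_left_mono) auto
  also have "\<dots> \<le> s n / n"
    using mono n(1) npos by (intro divide_right_mono) (auto dest: monoD)
  finally show "s (j*2^m) / (j*2^m) * (r / (r + 1)) \<le> s n / n" .
  have "s n / n \<le> s ((j+1)*2^m) / n"
    using monoD[OF mono less_imp_le[OF n(2)]] npos by (intro divide_right_mono) auto
  also have "\<dots> \<le> s ((j+1)*2^m) / (real j * 2^m)"
    using n_lo jr p npos nonneg[of "(j+1)*2^m"] by (intro divide_left_mono) auto
  also have "\<dots> \<le> s ((j+1)*2^m) / ((j+1)*2^m) * ((r + 1) / r)"
  proof -
    have "(real r + 1) * (real j * 2^m) \<ge> real r * ((real j + 1) * 2^m)"
      using mult_right_mono[OF jr(1) less_imp_le[OF p]] by (simp add: algebra_simps)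
    then have "1 / (real j * 2^m) \<le> (real r + 1) / (real r * ((real j + 1) * 2^m))"
      using jr p by (simp add: divide_simps)
    note mult_left_mono[OF this nonneg[of "(j+1)*2^m"]]
    then show ?thesis by (simp add: ac_simps distrib_right)
  qed
  finally show "s n / n \<le> s ((j+1)*2^m) / ((j+1)*2^m) * ((r + 1) / r)" .
qed

lemma eventually_dyadic_bracket:
  fixes s :: "nat \<Rightarrow> real" and r :: nat
  assumes r: "r \<ge> 1" and Q: "\<And>j. j \<ge> 1 \<Longrightarrow> \<forall>\<^sub>F m in sequentially. Q (s (j*2^m) / (j*2^m))"
  shows "\<forall>\<^sub>F n in sequentially. \<exists>m j. r \<le> j \<and> j * 2^m \<le> n \<and> n < (j+1) * 2^m
      \<and> Q (s (j*2^m) / (j*2^m)) \<and> Q (s ((j+1)*2^m) / ((j+1)*2^m))"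
proof -
  have "\<forall>\<^sub>F m in sequentially. \<forall>j\<in>{r..2*r}. Q (s (j*2^m) / (j*2^m))"
    using Q r by (intro eventually_ball_finite) auto
  then obtain M where M: "\<And>m j. m \<ge> M \<Longrightarrow> j \<in> {r..2*r} \<Longrightarrow> Q (s (j*2^m) / (j*2^m))"
    unfolding eventually_sequentially by blast
  have "\<exists>m j. r \<le> j \<and> j * 2^m \<le> n \<and> n < (j+1) * 2^m
      \<and> Q (s (j*2^m) / (j*2^m)) \<and> Q (s ((j+1)*2^m) / ((j+1)*2^m))" if n: "r * 2^M \<le> n" for n
  proof -
    obtain m j where "m \<ge> M" "r \<le> j" "j < 2*r" "j * 2^m \<le> n" "n < (j+1) * 2^m"
      using exists_dyadic_bracket[OF r n] by blast
    then show ?thesis using M[of m j] M[of m "j+1"] by (intro exI[of _ m] exI[of _ j]) auto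
  qed
  then show ?thesis unfolding eventually_sequentially by blast
qed

lemma ex_nat_ge_one_less_mult:
  fixes c \<delta> :: real
  assumes "0 < \<delta>"
  shows "\<exists>r::nat. (1::nat) \<le> r \<and> c < \<delta> * r"
proof -
  obtain r0 :: nat where "c / \<delta> < r0" using reals_Archimedean2 by blast
  then have "c < \<delta> * r0" using assms by (metis mult.commute pos_divide_less_eq)
  also have "\<dots> \<le> \<delta> * Suc r0" using assms by (intro mult_left_mono) auto
  finally show ?thesis by (intro exI[of _ "Suc r0"]) simp
qed

context
  fixes s :: "nat \<Rightarrow> real" and \<mu> :: real
  assumes mono: "mono s" and nonneg: "\<And>n. 0 \<le> s n"
    and lim: "\<And>j. j \<ge> 1 \<Longrightarrow> (\<lambda>m. s (j*2^m) / (j*2^m)) \<longlonglongrightarrow> \<mu>"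
begin

lemma eventually_ratio_less_of_dyadic_subseqs:
  assumes "\<mu> < a"
  shows "\<forall>\<^sub>F n in sequentially. s n / n < a"
proof -
  define \<delta> where "\<delta> = (a - \<mu>) / 2"
  have \<delta>: "0 < \<delta>" "\<mu> + 2 * \<delta> = a" using assms by (simp_all add: \<delta>_def field_simps)
  obtain r :: nat where r: "1 \<le> r" "\<mu> + \<delta> < \<delta> * r"
    using ex_nat_ge_one_less_mult[OF \<delta>(1), of "\<mu> + \<delta>"] by blast
  have "\<forall>\<^sub>F n in sequentially. \<exists>m j. r \<le> j \<and> j * 2^m \<le> n \<and> n < (j+1) * 2^m
      \<and> s (j*2^m) / (j*2^m) < \<mu> + \<delta> \<and> s ((j+1)*2^m) / ((j+1)*2^m) < \<mu> + \<delta>"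
  proof (rule eventually_dyadic_bracket[OF r(1)])
    fix j :: nat assume "j \<ge> 1"
    from order_tendstoD(2)[OF lim[OF this]] \<delta>(1)
    show "\<forall>\<^sub>F m in sequentially. s (j*2^m) / (j*2^m) < \<mu> + \<delta>" by simp
  qed
  then show ?thesis
  proof (rule eventually_mono, elim exE conjE)
    fix n m j assume j: "r \<le> j" "j * 2^m \<le> n" "n < (j+1) * 2^m"
      and below: "s ((j+1)*2^m) / ((j+1)*2^m) < \<mu> + \<delta>"
    have "(\<mu> + \<delta>) / r < \<delta>" using r by (subst pos_divide_less_eq) (auto simp: mult.commute)
    have "s n / n \<le> s ((j+1)*2^m) / ((j+1)*2^m) * ((r + 1) / r)"
      by (rule monotone_ratio_bracket(2)[OF mono nonneg r(1) j])
    also have "\<dots> < (\<mu> + \<delta>) * ((r + 1) / r)"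
      using below r(1) by (intro mult_strict_right_mono) auto
    also have "\<dots> = \<mu> + \<delta> + (\<mu> + \<delta>) / r"
      using r(1) by (simp add: field_simps)
    also have "\<dots> < a"
      using \<open>(\<mu> + \<delta>) / r < \<delta>\<close> \<delta> by linarith
    finally show "s n / n < a" .
  qed
qed

lemma eventually_ratio_greater_of_dyadic_subseqs:
  assumes "a < \<mu>"
  shows "\<forall>\<^sub>F n in sequentially. a < s n / n"
proof (cases "a < 0")
  case True
  then show ?thesis
    using nonneg by (intro always_eventually allI) (metis divide_nonneg_nonneg of_nat_0_le_iff order_less_le_trans)
next
  case False
  define \<delta> where "\<delta> = (\<mu> - a) / 2"
  have \<delta>: "0 < \<delta>" "a + 2 * \<delta> = \<mu>" using assms by (simp_all add: \<delta>_def field_simps)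
  obtain r :: nat where r: "1 \<le> r" "\<mu> - \<delta> < \<delta> * r"
    using ex_nat_ge_one_less_mult[OF \<delta>(1), of "\<mu> - \<delta>"] by blast
  have "\<forall>\<^sub>F n in sequentially. \<exists>m j. r \<le> j \<and> j * 2^m \<le> n \<and> n < (j+1) * 2^m
      \<and> \<mu> - \<delta> < s (j*2^m) / (j*2^m) \<and> \<mu> - \<delta> < s ((j+1)*2^m) / ((j+1)*2^m)"
  proof (rule eventually_dyadic_bracket[OF r(1)])
    fix j :: nat assume "j \<ge> 1"
    from order_tendstoD(1)[OF lim[OF this]] \<delta>(1)
    show "\<forall>\<^sub>F m in sequentially. \<mu> - \<delta> < s (j*2^m) / (j*2^m)" by simp
  qed
  then show ?thesis
  proof (rule eventually_mono, elim exE conjE)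
    fix n m j assume j: "r \<le> j" "j * 2^m \<le> n" "n < (j+1) * 2^m"
      and above: "\<mu> - \<delta> < s (j*2^m) / (j*2^m)"
    have "(\<mu> - \<delta>) / (r + 1) < \<delta>"
      using r \<delta> by (subst pos_divide_less_eq) (auto simp: distrib_left)
    then have "a < \<mu> - \<delta> - (\<mu> - \<delta>) / (r + 1)"
      using \<delta> by linarith
    also have "\<dots> = (\<mu> - \<delta>) * (r / (r + 1))"
      by (simp add: field_simps)
    also have "\<dots> < s (j*2^m) / (j*2^m) * (r / (r + 1))"
      using above r(1) by (intro mult_strict_right_mono) auto
    also have "\<dots> \<le> s n / n"
      by (rule monotone_ratio_bracket(1)[OF mono nonneg r(1) j])
    finally show "a < s n / n" .
  qed
qed

lemma tendsto_ratio_of_dyadic_subseqs: "(\<lambda>n. s n / n) \<longlonglongrightarrow> \<mu>"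
  by (rule order_tendstoI)
     (use eventually_ratio_less_of_dyadic_subseqs eventually_ratio_greater_of_dyadic_subseqs in auto)

end

locale nonneg_iid = prob_space +
  fixes X :: "nat \<Rightarrow> 'a \<Rightarrow> real"
  assumes measurable_X[measurable]: "\<And>i. X i \<in> borel_measurable M"
    and nonneg_X: "\<And>i \<omega>. 0 \<le> X i \<omega>"
    and indep_X: "indep_vars (\<lambda>_. borel) X UNIV"
    and distr_X: "\<And>i. distr M borel (X i) = distr M borel (X 0)"
    and integrable_X0: "integrable M (X 0)"
begin

lemma expectation_comp_X:
  fixes g :: "real \<Rightarrow> real"
  assumes "g \<in> borel_measurable borel"
  shows "expectation (\<lambda>\<omega>. g (X i \<omega>)) = expectation (\<lambda>\<omega>. g (X 0 \<omega>))"
  using integral_distr[OF measurable_X[of i] assms] integral_distr[OF measurable_X[of 0] assms]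
  by (simp add: distr_X[of i])

lemma prob_X_gt: "prob {\<omega>\<in>space M. t < X i \<omega>} = prob {\<omega>\<in>space M. t < X 0 \<omega>}"
proof -
  have "prob {\<omega>\<in>space M. t < X i \<omega>} = measure (distr M borel (X i)) {t<..}" for i
    by (subst measure_distr) (auto intro: arg_cong[where f="measure M"])
  then show ?thesis by (simp add: distr_X[of i])
qed

lemma integrable_min_X: "0 \<le> c \<Longrightarrow> integrable M (\<lambda>\<omega>. min (X i \<omega>) c)"
  by (rule integrable_const_bound[where B=c]) (auto simp: nonneg_X)

lemma integrable_min_X_square: "0 \<le> c \<Longrightarrow> integrable M (\<lambda>\<omega>. (min (X i \<omega>) c)^2)"
  by (rule integrable_const_bound[where B="c^2"]) (auto intro!: power_mono simp: nonneg_X)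

lemma summable_expectation_exceeding_dyadic:
  assumes "0 < c"
  shows "summable (\<lambda>m. expectation (\<lambda>\<omega>. if c * 2^m < X 0 \<omega> then c * 2^m else 0))"
proof (rule summableI_nonneg_bounded[where x="expectation (\<lambda>\<omega>. 2 * X 0 \<omega>)"])
  have int: "integrable M (\<lambda>\<omega>. if c * 2^m < X 0 \<omega> then c * 2^m else 0)" for m
    by (rule integrable_const_bound[where B="c * 2^m"]) (use assms in auto)
  show "0 \<le> expectation (\<lambda>\<omega>. if c * 2^m < X 0 \<omega> then c * 2^m else 0)" for m
    using assms by (intro integral_nonneg_AE) auto
  show "(\<Sum>m<N. expectation (\<lambda>\<omega>. if c * 2^m < X 0 \<omega> then c * 2^m else 0))
      \<le> expectation (\<lambda>\<omega>. 2 * X 0 \<omega>)" for N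
  proof -
    have "(\<Sum>m<N. expectation (\<lambda>\<omega>. if c * 2^m < X 0 \<omega> then c * 2^m else 0))
        = expectation (\<lambda>\<omega>. \<Sum>m<N. if c * 2^m < X 0 \<omega> then c * 2^m else 0)"
      by (simp add: integral_sum int)
    also have "\<dots> \<le> expectation (\<lambda>\<omega>. 2 * X 0 \<omega>)"
      by (rule integral_mono)
         (auto intro!: integrable_sum int integrable_X0 sum_dyadic_below_le nonneg_X assms)
    finally show ?thesis .
  qed
qed

lemma AE_eventually_le_dyadic:
  assumes "j \<ge> 1"
  shows "AE \<omega> in M. eventually (\<lambda>m. \<forall>i<j*2^m. X i \<omega> \<le> real j * 2^m) sequentially"
proof -
  define k :: "nat \<Rightarrow> real" where "k m = real j * 2^m" for m
  define E where "E m = (\<Union>i<j*2^m. {\<omega>\<in>space M. k m < X i \<omega>})" for m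
  have [measurable]: "E m \<in> sets M" for m unfolding E_def by measurable
  have prob_E: "measure M (E m) \<le> expectation (\<lambda>\<omega>. if k m < X 0 \<omega> then k m else 0)" for m
  proof -
    have "measure M (E m) \<le> (\<Sum>i<j*2^m. prob {\<omega>\<in>space M. k m < X i \<omega>})"
      unfolding E_def by (rule measure_UNION_le) auto
    also have "\<dots> = (\<Sum>i<j*2^m. prob {\<omega>\<in>space M. k m < X 0 \<omega>})"
      by (intro sum.cong refl prob_X_gt)
    also have "\<dots> = expectation (\<lambda>\<omega>. k m * indicator {\<omega>\<in>space M. k m < X 0 \<omega>} \<omega>)"
      by (simp add: k_def)
    also have "\<dots> = expectation (\<lambda>\<omega>. if k m < X 0 \<omega> then k m else 0)"
      by (rule Bochner_Integration.integral_cong) (auto simp: indicator_def)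
    finally show ?thesis .
  qed
  have "summable (\<lambda>m. measure M (E m))"
    using assms prob_E[unfolded k_def]
    by (intro summable_comparison_test'[OF summable_expectation_exceeding_dyadic[of "real j"]]) auto
  then have "AE \<omega> in M. eventually (\<lambda>m. \<omega> \<in> space M - E m) sequentially"
    by (intro borel_cantelli_AE1) (auto simp: emeasure_eq_measure)
  then show ?thesis
  proof eventually_elim
    case (elim \<omega>)
    then show ?case
      by (rule eventually_mono) (auto simp: E_def k_def not_less)
  qed
qed

lemma expectation_truncated_sum:
  assumes "0 \<le> c"
  shows "expectation (\<lambda>\<omega>. \<Sum>i<n. min (X i \<omega>) c) = n * expectation (\<lambda>\<omega>. min (X 0 \<omega>) c)"
proof -
  have "expectation (\<lambda>\<omega>. \<Sum>i<n. min (X i \<omega>) c) = (\<Sum>i<n. expectation (\<lambda>\<omega>. min (X i \<omega>) c))"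
    using integrable_min_X[OF assms] by (simp add: integral_sum)
  also have "\<dots> = (\<Sum>i<n. expectation (\<lambda>\<omega>. min (X 0 \<omega>) c))"
    by (intro sum.cong refl expectation_comp_X) measurable
  finally show ?thesis by simp
qed

lemma variance_truncated_sum_le:
  assumes "0 \<le> c"
  shows "variance (\<lambda>\<omega>. \<Sum>i<n. min (X i \<omega>) c) \<le> n * expectation (\<lambda>\<omega>. (min (X 0 \<omega>) c)^2)"
proof -
  have "indep_vars (\<lambda>_. borel) (\<lambda>i \<omega>. min (X i \<omega>) c) {..<n}"
    by (rule indep_vars_compose2[where Y="\<lambda>i x. min x c", OF indep_vars_subset[OF indep_X]]) auto
  then have "variance (\<lambda>\<omega>. \<Sum>i<n. min (X i \<omega>) c) = (\<Sum>i<n. variance (\<lambda>\<omega>. min (X i \<omega>) c))"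
    by (rule variance_sum_indep_bounded[OF finite_lessThan _, where B=c]) (use assms nonneg_X in auto)
  also have "\<dots> = (\<Sum>i<n. variance (\<lambda>\<omega>. min (X 0 \<omega>) c))"
  proof (intro sum.cong refl)
    fix i
    have "expectation (\<lambda>\<omega>. min (X i \<omega>) c) = expectation (\<lambda>\<omega>. min (X 0 \<omega>) c)"
      by (rule expectation_comp_X) measurable
    then show "variance (\<lambda>\<omega>. min (X i \<omega>) c) = variance (\<lambda>\<omega>. min (X 0 \<omega>) c)"
      by (simp only:) (rule expectation_comp_X, measurable)
  qed
  also have "\<dots> \<le> n * expectation (\<lambda>\<omega>. (min (X 0 \<omega>) c)^2)"
    using variance_eq[OF integrable_min_X[OF assms] integrable_min_X_square[OF assms]]
    by (simp add: mult_left_mono)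
  finally show ?thesis .
qed

lemma summable_truncated_second_moment:
  assumes "0 < c"
  shows "summable (\<lambda>m. expectation (\<lambda>\<omega>. (min (X 0 \<omega>) (c * 2^m))^2) / (c * 2^m))"
proof (rule summableI_nonneg_bounded[where x="expectation (\<lambda>\<omega>. 4 * X 0 \<omega>)"])
  show "0 \<le> expectation (\<lambda>\<omega>. (min (X 0 \<omega>) (c * 2^m))^2) / (c * 2^m)" for m
    using assms by simp
  have int: "integrable M (\<lambda>\<omega>. (min (X 0 \<omega>) (c * 2^m))^2 / (c * 2^m))" for m
    using integrable_min_X_square[of "c * 2^m" 0] assms by simp
  show "(\<Sum>m<N. expectation (\<lambda>\<omega>. (min (X 0 \<omega>) (c * 2^m))^2) / (c * 2^m))
      \<le> expectation (\<lambda>\<omega>. 4 * X 0 \<omega>)" for N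
  proof -
    have "(\<Sum>m<N. expectation (\<lambda>\<omega>. (min (X 0 \<omega>) (c * 2^m))^2) / (c * 2^m))
        = expectation (\<lambda>\<omega>. \<Sum>m<N. (min (X 0 \<omega>) (c * 2^m))^2 / (c * 2^m))"
      by (simp add: integral_sum int)
    also have "\<dots> \<le> expectation (\<lambda>\<omega>. 4 * X 0 \<omega>)"
      by (rule integral_mono)
         (auto intro!: integrable_sum int integrable_X0 sum_truncated_square_dyadic_le nonneg_X assms)
    finally show ?thesis .
  qed
qed

lemma prob_truncated_sum_deviation_le:
  fixes n :: nat and c t :: real
  assumes "0 \<le> c" "0 < t"
  defines "T \<omega> \<equiv> \<Sum>i<n. min (X i \<omega>) c"
  shows "prob {\<omega>\<in>space M. t \<le> \<bar>T \<omega> - expectation T\<bar>} \<le> n * expectation (\<lambda>\<omega>. (min (X 0 \<omega>) c)^2) / t^2"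
proof -
  have [measurable]: "T \<in> borel_measurable M" unfolding T_def by measurable
  have "\<bar>T \<omega>\<bar> \<le> n * c" for \<omega>
  proof -
    have "\<bar>T \<omega>\<bar> = T \<omega>"
      unfolding T_def using nonneg_X assms(1) by (intro abs_of_nonneg sum_nonneg) auto
    also have "\<dots> \<le> (\<Sum>i<n. c)" unfolding T_def by (rule sum_mono) simp
    finally show ?thesis by simp
  qed
  then have "(T \<omega>)^2 \<le> (n * c)^2" for \<omega>
    using power_mono[OF _ abs_ge_zero, of "T \<omega>" "n * c" 2] by simp
  then have "integrable M (\<lambda>\<omega>. (T \<omega>)^2)"
    by (intro integrable_const_bound[where B="(n * c)^2"]) auto
  then have "prob {\<omega>\<in>space M. t \<le> \<bar>T \<omega> - expectation T\<bar>} \<le> variance T / t^2"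
    using assms(2) by (intro Chebyshev_inequality) auto
  also have "\<dots> \<le> n * expectation (\<lambda>\<omega>. (min (X 0 \<omega>) c)^2) / t^2"
    using variance_truncated_sum_le[OF assms(1), of n] unfolding T_def[abs_def]
    by (intro divide_right_mono) simp_all
  finally show ?thesis .
qed

lemma AE_truncated_sum_concentration:
  assumes "j \<ge> 1"
  defines "T m \<omega> \<equiv> \<Sum>i<j*2^m. min (X i \<omega>) (real j * 2^m)"
  shows "AE \<omega> in M. (\<lambda>m. (T m \<omega> - expectation (T m)) / (real j * 2^m)) \<longlonglongrightarrow> 0"
proof (rule AE_tendsto_0_of_AE_eventually_less)
  fix \<epsilon> :: real assume \<epsilon>: "0 < \<epsilon>"
  define k :: "nat \<Rightarrow> real" where "k m = real j * 2^m" for m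
  have kpos: "k m > 0" for m using assms by (simp add: k_def)
  define h where "h m = expectation (\<lambda>\<omega>. (min (X 0 \<omega>) (k m))^2) / k m" for m
  have "summable h"
    unfolding h_def k_def using summable_truncated_second_moment[of "real j"] assms by simp
  have "prob {\<omega>\<in>space M. \<epsilon> * k m \<le> \<bar>T m \<omega> - expectation (T m)\<bar>} \<le> h m / \<epsilon>^2" for m
  proof -
    have "prob {\<omega>\<in>space M. \<epsilon> * k m \<le> \<bar>T m \<omega> - expectation (T m)\<bar>}
        \<le> k m * expectation (\<lambda>\<omega>. (min (X 0 \<omega>) (k m))^2) / (\<epsilon> * k m)^2"
      using prob_truncated_sum_deviation_le[of "k m" "\<epsilon> * k m" "j*2^m"] \<epsilon> kpos[of m]
      unfolding T_def[abs_def] by (simp add: k_def)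
    also have "\<dots> = h m / \<epsilon>^2"
      using kpos[of m] \<epsilon> by (simp add: h_def field_simps power2_eq_square)
    finally show ?thesis .
  qed
  then have "summable (\<lambda>m. prob {\<omega>\<in>space M. \<epsilon> * k m \<le> \<bar>T m \<omega> - expectation (T m)\<bar>})"
    by (intro summable_comparison_test'[OF summable_divide[OF \<open>summable h\<close>, of "\<epsilon>^2"]]) simp
  then have "AE \<omega> in M. \<forall>\<^sub>F m in sequentially.
      \<omega> \<in> space M - {\<omega>\<in>space M. \<epsilon> * k m \<le> \<bar>T m \<omega> - expectation (T m)\<bar>}"
    by (intro borel_cantelli_AE1) (auto simp: emeasure_eq_measure T_def)
  then show "AE \<omega> in M. \<forall>\<^sub>F m in sequentially. \<bar>(T m \<omega> - expectation (T m)) / (real j * 2^m)\<bar> < \<epsilon>"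
  proof eventually_elim
    case (elim \<omega>)
    then show ?case
    proof (rule eventually_mono)
      fix m assume "\<omega> \<in> space M - {\<omega>\<in>space M. \<epsilon> * k m \<le> \<bar>T m \<omega> - expectation (T m)\<bar>}"
      then have "\<bar>T m \<omega> - expectation (T m)\<bar> / k m < \<epsilon>"
        using kpos[of m] by (auto simp: pos_divide_less_eq mult.commute not_le)
      then show "\<bar>(T m \<omega> - expectation (T m)) / (real j * 2^m)\<bar> < \<epsilon>"
        using kpos[of m] by (simp add: k_def abs_divide)
    qed
  qed
qed

lemma strong_law_dyadic:
  assumes "j \<ge> 1"
  shows "AE \<omega> in M. (\<lambda>m. (\<Sum>i<j*2^m. X i \<omega>) / (real j * 2^m)) \<longlonglongrightarrow> expectation (X 0)"
proof -
  define k :: "nat \<Rightarrow> real" where "k m = real j * 2^m" for m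
  define T where "T m \<omega> = (\<Sum>i<j*2^m. min (X i \<omega>) (k m))" for m \<omega>
  have kpos: "k m > 0" for m using assms by (simp add: k_def)
  have "filterlim k at_top sequentially"
  proof (rule filterlim_at_top_mono[OF filterlim_real_sequentially])
    have "real m \<le> 2^m" for m :: nat
      using less_exp[of m] by (simp add: of_nat_less_two_power less_imp_le)
    also have "2^m \<le> k m" for m using assms by (simp add: k_def)
    finally show "\<forall>\<^sub>F m in sequentially. real m \<le> k m" by simp
  qed
  then have "(\<lambda>m. expectation (\<lambda>\<omega>. min (X 0 \<omega>) (k m))) \<longlonglongrightarrow> expectation (X 0)"
    by (intro tendsto_expectation_min integrable_X0 nonneg_X less_imp_le[OF kpos])
  moreover have "expectation (T m) / k m = expectation (\<lambda>\<omega>. min (X 0 \<omega>) (k m))" for m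
    unfolding T_def[abs_def] using expectation_truncated_sum[of "k m" "j*2^m"] kpos[of m] assms
    by (simp add: k_def)
  ultimately have mean: "(\<lambda>m. expectation (T m) / k m) \<longlonglongrightarrow> expectation (X 0)"
    by simp
  show ?thesis
    using AE_eventually_le_dyadic[OF assms] AE_truncated_sum_concentration[OF assms]
  proof eventually_elim
    case (elim \<omega>)
    \<comment> \<open>Eventually no summand exceeds the truncation level, so truncating changes nothing.\<close>
    have "eventually (\<lambda>m. (T m \<omega> - expectation (T m)) / k m + expectation (T m) / k m
        = (\<Sum>i<j*2^m. X i \<omega>) / (real j * 2^m)) sequentially"
      using elim(1) by (rule eventually_mono) (simp add: T_def k_def diff_divide_distrib)
    moreover have "(\<lambda>m. (T m \<omega> - expectation (T m)) / k m + expectation (T m) / k m)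
        \<longlonglongrightarrow> 0 + expectation (X 0)"
      using elim(2) by (intro tendsto_add mean) (simp add: T_def[abs_def] k_def)
    ultimately show ?case by (simp add: Lim_transform_eventually)
  qed
qed

lemma strong_law:
  "AE \<omega> in M. (\<lambda>n. (\<Sum>i<n. X i \<omega>) / n) \<longlonglongrightarrow> expectation (X 0)"
proof -
  have "AE \<omega> in M. \<forall>j. (\<lambda>m. (\<Sum>i<Suc j*2^m. X i \<omega>) / (real (Suc j) * 2^m)) \<longlonglongrightarrow> expectation (X 0)"
    by (subst AE_all_countable) (intro allI strong_law_dyadic, simp)
  then show ?thesis
  proof eventually_elim
    case (elim \<omega>)
    show ?case
    proof (rule tendsto_ratio_of_dyadic_subseqs)
      show "mono (\<lambda>n. \<Sum>i<n. X i \<omega>)"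
        by (intro monoI sum_mono2) (auto simp: nonneg_X)
      show "0 \<le> (\<Sum>i<n. X i \<omega>)" for n
        by (intro sum_nonneg) (simp add: nonneg_X)
      fix j :: nat assume "j \<ge> 1"
      then obtain j' where "j = Suc j'" by (cases j) auto
      then show "(\<lambda>m. (\<Sum>i<j*2^m. X i \<omega>) / real (j*2^m)) \<longlonglongrightarrow> expectation (X 0)"
        using elim[rule_format, of j'] by (simp only: of_nat_mult of_nat_power of_nat_numeral)
    qed
  qed
qed

end

lemma (in prob_space) strong_law_comp:
  assumes Y_meas: "\<And>i. Y i \<in> M \<rightarrow>\<^sub>M N"
    and Y_distr: "\<And>i. distr M N (Y (Suc i)) = distr M N (Y 1)"
    and indep: "indep_vars (\<lambda>_. borel) (\<lambda>i \<omega>. g (Y (Suc i) \<omega>)) UNIV"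
    and g: "g \<in> borel_measurable N" "\<And>x. 0 \<le> g x"
    and int: "integrable M (\<lambda>\<omega>. g (Y 1 \<omega>))"
  shows "AE \<omega> in M. (\<lambda>n. (\<Sum>i\<in>{1..n}. g (Y i \<omega>)) / n) \<longlonglongrightarrow> expectation (\<lambda>\<omega>. g (Y 1 \<omega>))"
proof -
  interpret nonneg_iid M "\<lambda>i \<omega>. g (Y (Suc i) \<omega>)"
  proof
    show "(\<lambda>\<omega>. g (Y (Suc i) \<omega>)) \<in> borel_measurable M" for i
      using Y_meas g(1) by measurable
    show "distr M borel (\<lambda>\<omega>. g (Y (Suc i) \<omega>)) = distr M borel (\<lambda>\<omega>. g (Y (Suc 0) \<omega>))" for i
      using distr_comp_eq_of_distr_eq[OF Y_distr Y_meas Y_meas g(1)] by simp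
  qed (use g(2) indep int in simp_all)
  show ?thesis
    using strong_law by (simp add: sum.atLeast1_atMost_eq)
qed

section \<open>The thinned walk and its reflection at zero\<close>

lemma Sf_0: "Sf I U f 0 \<omega> = 0"
  by (simp add: Sf_def Splus_def Sminus_def)

lemma Sf_Suc: "Sf I U f (Suc n) \<omega> = Sf I U f n \<omega> + (Cf I U f n \<omega> - ineg (I (Suc n) \<omega>))"
proof -
  let ?a = "Splus I n \<omega>" and ?b = "Splus I (Suc n) \<omega>"
  have "{1..?b} = {1..?a} \<union> {?a<..?b}" "{1..?a} \<inter> {?a<..?b} = {}"
    by (auto simp: Splus_def)
  then have "(\<Sum>j\<in>{1..?b}. indicator {0..f} (U j \<omega>) :: real)
      = (\<Sum>j\<in>{1..?a}. indicator {0..f} (U j \<omega>)) + (\<Sum>j\<in>{?a<..?b}. indicator {0..f} (U j \<omega>))"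
    by (simp add: sum.union_disjoint)
  then show ?thesis by (simp add: Sf_def Cf_def Sminus_def)
qed

lemma Mf_0: "Mf I U f 0 \<omega> = 0"
  by (simp add: Mf_def)

lemma Mf_Suc: "Mf I U f (Suc n) \<omega> = min (Mf I U f n \<omega>) (Sf I U f (Suc n) \<omega>)"
proof -
  have "insert 0 ((\<lambda>k. Sf I U f k \<omega>) ` {1..Suc n})
      = insert (Sf I U f (Suc n) \<omega>) (insert 0 ((\<lambda>k. Sf I U f k \<omega>) ` {1..n}))"
    by (auto simp: atLeastAtMostSuc_conv)
  then show ?thesis unfolding Mf_def by (simp add: min.commute)
qed

lemma Lf_eq_Sf_minus_Mf: "Lf I U f n \<omega> = Sf I U f n \<omega> - Mf I U f n \<omega>"
  by (induction n) (auto simp: Sf_0 Mf_0 Sf_Suc Mf_Suc max_def min_def)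

lemma running_min_ge:
  fixes s :: "nat \<Rightarrow> real"
  assumes "b \<le> 0" "\<And>k. K < k \<Longrightarrow> b * k \<le> s k" "K \<le> n"
  shows "min (Min (insert 0 (s ` {1..K}))) (b * n) \<le> Min (insert 0 (s ` {1..n}))"
proof (rule Min.boundedI)
  fix x assume "x \<in> insert 0 (s ` {1..n})"
  then consider "x = 0" | k where "k \<in> {1..n}" "x = s k" by auto
  then show "min (Min (insert 0 (s ` {1..K}))) (b * n) \<le> x"
  proof cases
    case 1 then show ?thesis by (simp add: min.coboundedI1)
  next
    case (2 k)
    show ?thesis
    proof (cases "k \<le> K")
      case True
      then show ?thesis using 2 by (intro min.coboundedI1 Min_le) auto
    next
      case False
      have "b * n \<le> b * k" using 2 assms(1) by (intro mult_left_mono_neg) auto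
      also have "\<dots> \<le> s k" using False assms(2) by simp
      finally show ?thesis using 2 by (simp add: min.coboundedI2)
    qed
  qed
qed auto

context
  fixes s :: "nat \<Rightarrow> real" and d :: real
  assumes lim: "(\<lambda>n. s n / n) \<longlonglongrightarrow> d"
begin

lemma eventually_running_min_div_less:
  assumes a: "min d 0 < a"
  shows "\<forall>\<^sub>F n in sequentially. Min (insert 0 (s ` {1..n})) / n < a"
proof -
  define m where "m n = Min (insert 0 (s ` {1..n}))" for n
  have m_le: "m n \<le> 0" "1 \<le> n \<Longrightarrow> m n \<le> s n" for n
    unfolding m_def by (rule Min_le; auto)+
  have "\<forall>\<^sub>F n in sequentially. 0 < a \<or> (1 \<le> n \<and> s n / n < a)"
  proof (cases "0 < a")
    case False
    with a have "d < a" by simp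
    show ?thesis
      using order_tendstoD(2)[OF lim \<open>d < a\<close>] eventually_ge_at_top[of 1]
      by eventually_elim auto
  qed simp
  then show ?thesis
    unfolding m_def[symmetric]
  proof (rule eventually_mono)
    fix n assume "0 < a \<or> (1 \<le> n \<and> s n / n < a)"
    then show "m n / n < a"
      using divide_nonpos_nonneg[OF m_le(1)[of n], of "real n"] divide_right_mono[OF m_le(2), of n n]
      by auto
  qed
qed

lemma eventually_running_min_div_greater:
  assumes a: "a < min d 0"
  shows "\<forall>\<^sub>F n in sequentially. a < Min (insert 0 (s ` {1..n})) / n"
proof -
  define m where "m n = Min (insert 0 (s ` {1..n}))" for n
  define b where "b = (a + min d 0) / 2"
  have b: "a < b" "b < d" "b < 0" using a by (auto simp: b_def)
  obtain K where K: "1 \<le> K" "\<And>k. K \<le> k \<Longrightarrow> b < s k / k"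
    using eventually_conj[OF order_tendstoD(1)[OF lim b(2)] eventually_ge_at_top[of 1]]
    unfolding eventually_sequentially by (metis order.trans nle_le)
  then have above_line: "b * k \<le> s k" if "K < k" for k
    using that by (simp add: pos_less_divide_eq less_imp_le)
  have m_lower: "min (m K) (b * n) \<le> m n" if "K \<le> n" for n
    unfolding m_def by (rule running_min_ge[OF less_imp_le[OF b(3)] above_line that])
  have "\<forall>\<^sub>F n in sequentially. a < m K / n"
    using order_tendstoD(1)[OF lim_const_over_n[of "m K"], of a] a by simp
  then show ?thesis
    using eventually_ge_at_top[of K] unfolding m_def[symmetric]
  proof eventually_elim
    case (elim n)
    then have n: "0 < real n" using K(1) by simp
    have "a < min (m K / n) b" using elim b by simp
    also have "\<dots> = min (m K) (b * n) / n" using n by (simp add: min_divide_distrib_right)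
    also have "\<dots> \<le> m n / n" using m_lower[OF elim(2)] n by (intro divide_right_mono) auto
    finally show ?case .
  qed
qed

lemma tendsto_running_min_div: "(\<lambda>n. Min (insert 0 (s ` {1..n})) / n) \<longlonglongrightarrow> min d 0"
  by (rule order_tendstoI)
     (use eventually_running_min_div_less eventually_running_min_div_greater in auto)

end

lemma tendsto_Sf_div:
  assumes Splus: "(\<lambda>n. Splus I n \<omega> / n) \<longlonglongrightarrow> a" and a: "0 < a"
    and Sminus: "(\<lambda>n. Sminus I n \<omega> / n) \<longlonglongrightarrow> b"
    and count: "(\<lambda>N. (\<Sum>j\<in>{1..N}. indicator {0..f} (U j \<omega>)) / N) \<longlonglongrightarrow> f"
  shows "(\<lambda>n. Sf I U f n \<omega> / n) \<longlonglongrightarrow> f * a - b"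
proof -
  let ?A = "\<lambda>N. (\<Sum>j\<in>{1..N}. indicator {0..f} (U j \<omega>)) / real N"
  have "filterlim (\<lambda>n. Splus I n \<omega> / n * n) at_top sequentially"
    by (rule filterlim_tendsto_pos_mult_at_top[OF Splus a filterlim_real_sequentially])
  moreover have "eventually (\<lambda>n. Splus I n \<omega> / n * n = Splus I n \<omega>) sequentially"
    using eventually_gt_at_top[of 0] by eventually_elim simp
  ultimately have "filterlim (\<lambda>n. real (Splus I n \<omega>)) at_top sequentially"
    using filterlim_cong by fastforce
  then have "filterlim (\<lambda>n. Splus I n \<omega>) sequentially sequentially"
    by (simp add: filterlim_sequentially_iff_filterlim_real)
  then have "(\<lambda>n. ?A (Splus I n \<omega>)) \<longlonglongrightarrow> f"
    using count by (rule filterlim_compose[rotated])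
  then have "(\<lambda>n. ?A (Splus I n \<omega>) * (Splus I n \<omega> / n) - Sminus I n \<omega> / n) \<longlonglongrightarrow> f * a - b"
    by (intro tendsto_intros Splus Sminus)
  moreover have "?A (Splus I n \<omega>) * (Splus I n \<omega> / n) - Sminus I n \<omega> / n = Sf I U f n \<omega> / n" for n
    by (cases "Splus I n \<omega> = 0") (simp_all add: Sf_def diff_divide_distrib)
  ultimately show ?thesis by simp
qed

locale thinned_walk = prob_space +
  fixes I :: "nat \<Rightarrow> 'a \<Rightarrow> int" and U :: "nat \<Rightarrow> 'a \<Rightarrow> real" and f :: real
  assumes I_meas: "\<And>n. I n \<in> measurable M (count_space UNIV)"
    and U_meas[measurable]: "\<And>j. U j \<in> borel_measurable M"
    and I_ident: "\<And>n. distr M (count_space UNIV) (I n) = distr M (count_space UNIV) (I 0)"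
    and U_unif: "\<And>j. j \<ge> 1 \<Longrightarrow> distr M borel (U j) = uniform_measure lborel {0..1::real}"
    and indep: "indep_vars (\<lambda>_. borel)
        (\<lambda>i \<omega>. case i of Inl n \<Rightarrow> real_of_int (I n \<omega>) | Inr j \<Rightarrow> U j \<omega>)
        (range Inl \<union> Inr ` {1..})"
    and mom: "(\<integral>\<^sup>+\<omega>. ennreal (real (ineg (I 0 \<omega>))) \<partial>M)
              < (\<integral>\<^sup>+\<omega>. ennreal (real (ipos (I 0 \<omega>))) \<partial>M)"
    and fin: "(\<integral>\<^sup>+\<omega>. ennreal (real (ipos (I 0 \<omega>))) \<partial>M) < \<infinity>"
    and f: "f \<in> {0..1}"
begin

abbreviation "mean_pos \<equiv> expectation (\<lambda>\<omega>. real (ipos (I 0 \<omega>)))"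

abbreviation "mean_neg \<equiv> expectation (\<lambda>\<omega>. real (ineg (I 0 \<omega>)))"

lemma integrable_ipos: "integrable M (\<lambda>\<omega>. real (ipos (I 0 \<omega>)))"
  using I_meas fin by (intro integrableI_nonneg) auto

lemma integrable_ineg: "integrable M (\<lambda>\<omega>. real (ineg (I 0 \<omega>)))"
  using I_meas fin mom by (intro integrableI_nonneg) auto

lemma mean_neg_less_mean_pos: "0 \<le> mean_neg" "mean_neg < mean_pos"
proof -
  show "0 \<le> mean_neg" by simp
  moreover have "(\<integral>\<^sup>+\<omega>. ennreal (real (ipos (I 0 \<omega>))) \<partial>M) = ennreal mean_pos"
    "(\<integral>\<^sup>+\<omega>. ennreal (real (ineg (I 0 \<omega>))) \<partial>M) = ennreal mean_neg"
    using integrable_ipos integrable_ineg by (simp_all add: nn_integral_eq_integral)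
  ultimately show "mean_neg < mean_pos"
    using mom by (simp add: ennreal_less_iff)
qed

lemma indep_vars_comp_I:
  fixes g :: "int \<Rightarrow> real"
  shows "indep_vars (\<lambda>_. borel) (\<lambda>i \<omega>. g (I (Suc i) \<omega>)) UNIV"
proof -
  have "inj (Inl \<circ> Suc)" "range (Inl \<circ> Suc) \<subseteq> range Inl \<union> Inr ` {1..}"
    by (auto simp: inj_def)
  from indep_vars_comp_reindex[OF indep this, of "\<lambda>x. g \<lfloor>x\<rfloor>"] show ?thesis
    by (simp add: measurable_compose[OF measurable_real_floor])
qed

lemma strong_law_comp_I:
  fixes g :: "int \<Rightarrow> nat"
  assumes "integrable M (\<lambda>\<omega>. real (g (I 0 \<omega>)))"
  shows "AE \<omega> in M. (\<lambda>n. (\<Sum>i\<in>{1..n}. real (g (I i \<omega>))) / n) \<longlonglongrightarrow> expectation (\<lambda>\<omega>. real (g (I 0 \<omega>)))"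
proof -
  have [measurable]: "I n \<in> measurable M (count_space UNIV)" for n by (rule I_meas)
  have distr_eq: "distr M borel (\<lambda>\<omega>. real (g (I 1 \<omega>))) = distr M borel (\<lambda>\<omega>. real (g (I 0 \<omega>)))"
    by (rule distr_comp_eq_of_distr_eq[OF I_ident]) simp_all
  have "integrable M (\<lambda>\<omega>. real (g (I 1 \<omega>)))"
    using assms integrable_iff_of_distr_eq[OF distr_eq] by simp
  moreover have "AE \<omega> in M. (\<lambda>n. (\<Sum>i\<in>{1..n}. real (g (I i \<omega>))) / n) \<longlonglongrightarrow> expectation (\<lambda>\<omega>. real (g (I 1 \<omega>)))"
  proof (rule strong_law_comp[where Y=I and N="count_space UNIV" and g="\<lambda>x. real (g x)"])
    show "distr M (count_space UNIV) (I (Suc i)) = distr M (count_space UNIV) (I 1)" for i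
      using I_ident[of "Suc i"] I_ident[of 1] by simp
  qed (use calculation indep_vars_comp_I[of "\<lambda>x. real (g x)"] in simp_all)
  ultimately show ?thesis using integral_eq_of_distr_eq[OF distr_eq] by simp
qed

lemma AE_Splus_div: "AE \<omega> in M. (\<lambda>n. Splus I n \<omega> / n) \<longlonglongrightarrow> mean_pos"
  using strong_law_comp_I[OF integrable_ipos] by (simp add: Splus_def)

lemma AE_Sminus_div: "AE \<omega> in M. (\<lambda>n. Sminus I n \<omega> / n) \<longlonglongrightarrow> mean_neg"
  using strong_law_comp_I[OF integrable_ineg] by (simp add: Sminus_def)

lemma AE_count_div:
  "AE \<omega> in M. (\<lambda>N. (\<Sum>j\<in>{1..N}. indicator {0..f} (U j \<omega>)) / N) \<longlonglongrightarrow> f"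
proof -
  have "expectation (\<lambda>\<omega>. indicator {0..f} (U 1 \<omega>) :: real)
      = integral\<^sup>L (distr M borel (U 1)) (indicator {0..f})"
    by (rule integral_distr[symmetric]) auto
  also have "\<dots> = measure (uniform_measure lborel {0..1::real}) {0..f}"
    using U_unif[of 1] by simp
  also have "\<dots> = f" using f by (simp add: Int_absorb1)
  finally have mean: "expectation (\<lambda>\<omega>. indicator {0..f} (U 1 \<omega>) :: real) = f" .
  have "inj (Inr \<circ> Suc)" "range (Inr \<circ> Suc) \<subseteq> range Inl \<union> Inr ` {1..}"
    by (auto simp: inj_def)
  from indep_vars_comp_reindex[OF indep this, of "indicator {0..f}"]
  have "indep_vars (\<lambda>_. borel) (\<lambda>i \<omega>. indicator {0..f} (U (Suc i) \<omega>) :: real) UNIV"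
    by simp
  moreover have "integrable M (\<lambda>\<omega>. indicator {0..f} (U 1 \<omega>) :: real)"
    by (rule integrable_const_bound[where B=1]) auto
  ultimately show ?thesis
    using strong_law_comp[of U borel "indicator {0..f}"] U_unif mean by simp
qed

lemma AE_Sf_div: "AE \<omega> in M. (\<lambda>n. Sf I U f n \<omega> / n) \<longlonglongrightarrow> f * mean_pos - mean_neg"
  using AE_Splus_div AE_Sminus_div AE_count_div
proof eventually_elim
  case (elim \<omega>)
  show ?case
    using mean_neg_less_mean_pos by (intro tendsto_Sf_div elim) linarith
qed

end

theorem lemma3:
  fixes M :: "'a measure" and I :: "nat \<Rightarrow> 'a \<Rightarrow> int" and U :: "nat \<Rightarrow> 'a \<Rightarrow> real"
    and f :: real
  assumes "prob_space M"
    and I_meas: "\<And>n. I n \<in> measurable M (count_space UNIV)"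
    and U_meas: "\<And>j. U j \<in> borel_measurable M"
    and I_ident: "\<And>n. distr M (count_space UNIV) (I n) = distr M (count_space UNIV) (I 0)"
    and U_unif: "\<And>j. j \<ge> 1 \<Longrightarrow> distr M borel (U j) = uniform_measure lborel {0..1::real}"
    and indep: "prob_space.indep_vars M (\<lambda>_. borel)
        (\<lambda>i \<omega>. case i of Inl n \<Rightarrow> real_of_int (I n \<omega>) | Inr j \<Rightarrow> U j \<omega>)
        (range Inl \<union> Inr ` {1..})"
    and mom: "(\<integral>\<^sup>+\<omega>. ennreal (real (ineg (I 0 \<omega>))) \<partial>M)
              < (\<integral>\<^sup>+\<omega>. ennreal (real (ipos (I 0 \<omega>))) \<partial>M)"
    and fin: "(\<integral>\<^sup>+\<omega>. ennreal (real (ipos (I 0 \<omega>))) \<partial>M) < \<infinity>"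
    and f: "f \<in> {0..1}"
  shows "(AE \<omega> in M. (\<lambda>n. Lf I U f n \<omega> / real n) \<longlonglongrightarrow>
            max (f - prob_space.expectation M (\<lambda>\<omega>. real (ineg (I 0 \<omega>)))
                     / prob_space.expectation M (\<lambda>\<omega>. real (ipos (I 0 \<omega>)))) 0
            * prob_space.expectation M (\<lambda>\<omega>. real (ipos (I 0 \<omega>))))
       \<and> (AE \<omega> in M. (\<lambda>n. Mf I U f n \<omega> / real n) \<longlonglongrightarrow>
            - (- min (f - prob_space.expectation M (\<lambda>\<omega>. real (ineg (I 0 \<omega>)))
                     / prob_space.expectation M (\<lambda>\<omega>. real (ipos (I 0 \<omega>)))) 0)
            * prob_space.expectation M (\<lambda>\<omega>. real (ipos (I 0 \<omega>))))"
proof -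
  interpret thinned_walk M I U f
    using assms by (intro thinned_walk.intro thinned_walk_axioms.intro) simp_all
  define d where "d = f * mean_pos - mean_neg"
  have "0 < mean_pos" using mean_neg_less_mean_pos by linarith
  then have limits: "max (f - mean_neg / mean_pos) 0 * mean_pos = max d 0"
    "- (- min (f - mean_neg / mean_pos) 0) * mean_pos = min d 0"
    by (auto simp: d_def max_def min_def field_simps)
  have "AE \<omega> in M. (\<lambda>n. Mf I U f n \<omega> / n) \<longlonglongrightarrow> min d 0"
    using AE_Sf_div unfolding Mf_def d_def by eventually_elim (rule tendsto_running_min_div)
  moreover from this AE_Sf_div have "AE \<omega> in M. (\<lambda>n. Lf I U f n \<omega> / n) \<longlonglongrightarrow> max d 0"
  proof eventually_elim
    case (elim \<omega>)
    have "(\<lambda>n. Sf I U f n \<omega> / n - Mf I U f n \<omega> / n) \<longlonglongrightarrow> d - min d 0"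
      using elim by (intro tendsto_diff) (simp_all add: d_def)
    moreover have "d - min d 0 = max d 0" by simp
    ultimately show ?case by (simp add: Lf_eq_Sf_minus_Mf diff_divide_distrib)
  qed
  ultimately show ?thesis unfolding limits by simp
qed

end
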